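(* Let $V$ and $E$ be complex vector spaces of dimensions $n$ and $r$ with Hermitian metrics whose positive $(1,1)$-forms are $\omega$ and $h$, and equip $V\oplus E$ with the Hermitian metric $\alpha=p_V^*\omega+p_E^*h$. Let $R$ be a $(2,2)$-form on $V\oplus E$ that is the image, under the isomorphism $\bigwedge^{1,1}V^*\otimes\operatorname{End}E\cong\bigwedge^{1,1}V^*\otimes\bigwedge^{1,1}E^*\subset\bigwedge^{2,2}(V\oplus E)^*$ induced by $h$, of a Hermitian element of $\bigwedge^{1,1}V^*\otimes\operatorname{End}E$, and set $c_1=\Lambda_hR$. Then $$\lvert\Lambda_\omega R\rvert^2\le n\lvert R\rvert^2\quad\text{and}\quad\lvert c_1\rvert^2=\lvert\Lambda_hR\rvert^2\le r\lvert R\rvert^2,$$ with equality in the first inequality if and only if $R=u\wedge\omega$ for some $u$ that is the pullback of a $(1,1)$-form on $E$, and equality in the second if and only if $R=v\wedge h$ for some $v$ that is the pullback of a $(1,1)$-form on $V$.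
   Context: $p_V,p_E$ are the projections of $V\oplus E$ onto its factors, and $\omega$, $h$ are identified with their pullbacks to $V\oplus E$. All norms are those induced by $\alpha$ on $\bigwedge^*(V\oplus E)^*$. $\Lambda_\omega$ (resp. $\Lambda_h$) is the adjoint, with respect to this inner product, of the operator $w\mapsto\omega\wedge w$ (resp. $w\mapsto h\wedge w$). *)

theory Defs
  imports Complex_Main
begin

text \<open>
Coordinate model of the complexified exterior algebra of (V \<oplus> E)^*.
V = C^n, E = C^r, written in orthonormal coordinates z_1..z_n (for omega) and
w_1..w_r (for h).  The complexified cotangent space of V \<oplus> E has the basis
  dz_j  = index j               (j < n)
  dw_a  = index n + a           (a < r)
  dzb_j = index n + r + j       (j < n)    (conjugate dz-bar)
  dwb_a = index n + r + n + a   (a < r)    (conjugate dw-bar)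
so N = 2(n+r) indices.  A form is a function from finite index sets S
(the increasing wedge monomial over S) to its complex coefficient.
\<close>

type_synonym form = "nat set \<Rightarrow> complex"

definition dimC :: "nat \<Rightarrow> nat \<Rightarrow> nat" where
  "dimC n r = 2 * (n + r)"

definition mono :: "nat set \<Rightarrow> form" where
  "mono S = (\<lambda>T. if T = S then 1 else 0)"

definition fscale :: "complex \<Rightarrow> form \<Rightarrow> form" where
  "fscale c \<phi> = (\<lambda>S. c * \<phi> S)"

text \<open>Sign of the permutation sorting (sorted S) followed by (sorted T).\<close>
definition wsign :: "nat set \<Rightarrow> nat set \<Rightarrow> complex" where
  "wsign S T = (-1) ^ card {(s, t). s \<in> S \<and> t \<in> T \<and> t < s}"

definition wedge :: "form \<Rightarrow> form \<Rightarrow> form" where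
  "wedge \<phi> \<psi> = (\<lambda>U. \<Sum>S\<in>Pow U. wsign S (U - S) * \<phi> S * \<psi> (U - S))"

definition supp_in :: "nat \<Rightarrow> form \<Rightarrow> bool" where
  "supp_in N \<phi> = (\<forall>S. \<phi> S \<noteq> 0 \<longrightarrow> S \<subseteq> {..<N})"

text \<open>Hermitian inner product on forms induced by the Euclidean metric
(dx, dy orthonormal), so that |dz_j|^2 = |dzb_j|^2 = 2 and distinct
monomials are orthogonal.\<close>
definition finner :: "nat \<Rightarrow> form \<Rightarrow> form \<Rightarrow> complex" where
  "finner N \<phi> \<psi> = (\<Sum>S\<in>Pow {..<N}. of_nat (2 ^ card S) * \<phi> S * cnj (\<psi> S))"

definition fnorm :: "nat \<Rightarrow> form \<Rightarrow> real" where
  "fnorm N \<phi> = sqrt (Re (finner N \<phi> \<phi>))"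

definition Lam :: "nat \<Rightarrow> form \<Rightarrow> form \<Rightarrow> form" where
  "Lam N \<eta> \<phi> = (THE \<psi>. supp_in N \<psi> \<and>
      (\<forall>\<chi>. supp_in N \<chi> \<longrightarrow> finner N \<psi> \<chi> = finner N \<phi> (wedge \<eta> \<chi>)))"

text \<open>Positive (1,1)-forms of the Euclidean (Hermitian) metrics, pulled back
to V \<oplus> E:  omega = (i/2) sum dz_j \<and> dzb_j,  h = (i/2) sum dw_a \<and> dwb_a.\<close>
definition omegaV :: "nat \<Rightarrow> nat \<Rightarrow> form" where
  "omegaV n r = (\<lambda>U. \<Sum>j<n. (\<i>/2) * wedge (mono {j}) (mono {n+r+j}) U)"

definition hE :: "nat \<Rightarrow> nat \<Rightarrow> form" where
  "hE n r = (\<lambda>U. \<Sum>a<r. (\<i>/2) * wedge (mono {n+a}) (mono {n+r+n+a}) U)"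

text \<open>Hermitian element  sum A_{jkab} (i dz_j \<and> dzb_k) \<otimes> (endomorphism with
matrix entries A_{jk..}) of \<Lambda>^{1,1}V^* \<otimes> End E; Hermitian means
A k j b a = conj (A j k a b).\<close>
definition herm_coeffs :: "nat \<Rightarrow> nat \<Rightarrow> (nat \<Rightarrow> nat \<Rightarrow> nat \<Rightarrow> nat \<Rightarrow> complex) \<Rightarrow> bool" where
  "herm_coeffs n r A = (\<forall>j k a b. j < n \<longrightarrow> k < n \<longrightarrow> a < r \<longrightarrow> b < r \<longrightarrow>
       A k j b a = cnj (A j k a b))"

text \<open>Its image in \<Lambda>^{2,2}(V \<oplus> E)^* under the isomorphism induced by h
(the endomorphism with entries A_{..ab} goes to sum A_{..ab} i dw_a \<and> dwb_b).\<close>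
definition curv_form :: "nat \<Rightarrow> nat \<Rightarrow> (nat \<Rightarrow> nat \<Rightarrow> nat \<Rightarrow> nat \<Rightarrow> complex) \<Rightarrow> form" where
  "curv_form n r A = (\<lambda>U. \<Sum>j<n. \<Sum>k<n. \<Sum>a<r. \<Sum>b<r.
      A j k a b * wedge (fscale \<i> (wedge (mono {j}) (mono {n+r+k})))
                        (fscale \<i> (wedge (mono {n+a}) (mono {n+r+n+b}))) U)"

definition pullback_E11 :: "nat \<Rightarrow> nat \<Rightarrow> form \<Rightarrow> bool" where
  "pullback_E11 n r u = (\<forall>S. u S \<noteq> 0 \<longrightarrow> (\<exists>a<r. \<exists>b<r. S = {n+a, n+r+n+b}))"

definition pullback_V11 :: "nat \<Rightarrow> nat \<Rightarrow> form \<Rightarrow> bool" where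
  "pullback_V11 n r v = (\<forall>S. v S \<noteq> 0 \<longrightarrow> (\<exists>j<n. \<exists>k<n. S = {j, n+r+k}))"

end

theory Submission
  imports Defs
begin

text \<open>
In the orthonormal coordinates of the model, \<open>R = \<Sum> A\<^sub>j\<^sub>k\<^sub>a\<^sub>b (i dz\<^sub>j \<and> dz\<^sub>k-bar) \<and> (i dw\<^sub>a \<and> dw\<^sub>b-bar)\<close>
is a combination of distinct monomials of degree 4, so \<open>|R|\<^sup>2 = 16 \<Sum> |A\<^sub>j\<^sub>k\<^sub>a\<^sub>b|\<^sup>2\<close>.
Contracting with \<open>\<omega>\<close> kills every monomial with \<open>j \<noteq> k\<close> and turns the others into
\<open>2i dw\<^sub>a \<and> dw\<^sub>b-bar\<close>, so \<open>|\<Lambda>\<^sub>\<omega>R|\<^sup>2 = 16 \<Sum>\<^sub>a\<^sub>b |tr B\<^sub>a\<^sub>b|\<^sup>2\<close> where \<open>B\<^sub>a\<^sub>b = (A\<^sub>j\<^sub>k\<^sub>a\<^sub>b)\<^sub>j\<^sub>k\<close>.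
The inequality is therefore \<open>|tr B|\<^sup>2 \<le> n |B|\<^sup>2\<close> for every \<open>n \<times> n\<close> block: Cauchy-Schwarz on
the diagonal, then discarding the off-diagonal entries. Equality forces every block to be
scalar, \<open>B\<^sub>a\<^sub>b = c\<^sub>a\<^sub>b I\<close>, which says exactly that \<open>R = u \<and> \<omega>\<close> with \<open>u\<close> a multiple of
\<open>\<Sum> c\<^sub>a\<^sub>b dw\<^sub>a \<and> dw\<^sub>b-bar\<close>. The statement for \<open>\<Lambda>\<^sub>h\<close> is the same argument with the roles of
the two factors exchanged.
\<close>

lemma sum_Times_swap: "(\<Sum>pq\<in>A \<times> B. f pq) = (\<Sum>q\<in>B. \<Sum>p\<in>A. f (p, q))"
  unfolding sum.cartesian_product' by (rule sum.swap)

lemma sum_eq_sum_iff_of_le: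
  fixes f g :: "'a \<Rightarrow> 'b::ordered_cancel_comm_monoid_add"
  assumes "finite I" "\<And>i. i \<in> I \<Longrightarrow> f i \<le> g i"
  shows "sum f I = sum g I \<longleftrightarrow> (\<forall>i\<in>I. f i = g i)"
  using assms sum_mono_inv[of f I g] sum.cong[of I I f g] by blast

lemma cmod_sum_sq_identity:
  fixes x :: "nat \<Rightarrow> complex"
  shows "(\<Sum>j<n. \<Sum>k<n. (cmod (x j - x k))\<^sup>2) = 2 * (real n * (\<Sum>j<n. (cmod (x j))\<^sup>2) - (cmod (\<Sum>j<n. x j))\<^sup>2)"
proof -
  have cmod_sq: "(complex_of_real (cmod z))\<^sup>2 = z * cnj z" for z
    by (metis complex_norm_square of_real_power)
  have sum_swap: "(\<Sum>j<n. \<Sum>k<n. x j * cnj (x k)) = (\<Sum>j<n. \<Sum>k<n. x k * cnj (x j))"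
    by (rule sum.swap)
  have "(\<Sum>j<n. \<Sum>k<n. (x j - x k) * cnj (x j - x k)) =
        2 * (of_nat n * (\<Sum>j<n. x j * cnj (x j)) - (\<Sum>j<n. x j) * cnj (\<Sum>j<n. x j))"
    by (simp add: algebra_simps sum.distrib sum_subtractf sum_distrib_left sum_distrib_right cnj_sum sum_swap)
  then have "complex_of_real (\<Sum>j<n. \<Sum>k<n. (cmod (x j - x k))\<^sup>2) =
     complex_of_real (2 * (real n * (\<Sum>j<n. (cmod (x j))\<^sup>2) - (cmod (\<Sum>j<n. x j))\<^sup>2))"
    by (simp add: cmod_sq of_real_sum)
  then show ?thesis
    using of_real_eq_iff by blast
qed

lemma cmod_sum_sq_le:
  fixes x :: "nat \<Rightarrow> complex"
  shows "(cmod (\<Sum>j<n. x j))\<^sup>2 \<le> real n * (\<Sum>j<n. (cmod (x j))\<^sup>2)"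
  using cmod_sum_sq_identity[of x n] sum_nonneg[of "{..<n}" "\<lambda>j. \<Sum>k<n. (cmod (x j - x k))\<^sup>2"]
  by (simp add: sum_nonneg)

lemma cmod_sum_sq_eq_iff:
  fixes x :: "nat \<Rightarrow> complex"
  shows "(cmod (\<Sum>j<n. x j))\<^sup>2 = real n * (\<Sum>j<n. (cmod (x j))\<^sup>2) \<longleftrightarrow> (\<forall>j<n. \<forall>k<n. x j = x k)"
proof -
  have "(cmod (\<Sum>j<n. x j))\<^sup>2 = real n * (\<Sum>j<n. (cmod (x j))\<^sup>2) \<longleftrightarrow>
        (\<Sum>j<n. \<Sum>k<n. (cmod (x j - x k))\<^sup>2) = 0"
    unfolding cmod_sum_sq_identity by auto
  also have "\<dots> \<longleftrightarrow> (\<forall>j<n. \<forall>k<n. x j = x k)"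
    by (auto simp: sum_nonneg_eq_0_iff sum_nonneg)
  finally show ?thesis .
qed

lemma sum_diagonal:
  assumes "finite A"
  shows "(\<Sum>p\<in>A \<times> A. if fst p = snd p then f p else 0) = (\<Sum>j\<in>A. f (j, j))"
proof -
  have "(\<Sum>p\<in>A \<times> A. if fst p = snd p then f p else 0) = (\<Sum>p\<in>{p \<in> A \<times> A. fst p = snd p}. f p)"
    using assms by (simp add: sum.inter_filter)
  also have "{p \<in> A \<times> A. fst p = snd p} = (\<lambda>j. (j, j)) ` A"
    by auto
  also have "sum f \<dots> = (\<Sum>j\<in>A. f (j, j))"
    by (subst sum.reindex) (auto simp: inj_on_def)
  finally show ?thesis .
qed

lemma sum_diagonal_le:
  fixes f :: "'a \<times> 'a \<Rightarrow> real"
  assumes "finite A" and nonneg: "\<And>p. 0 \<le> f p"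
  shows "(\<Sum>j\<in>A. f (j, j)) \<le> (\<Sum>p\<in>A \<times> A. f p)"
    and "(\<Sum>j\<in>A. f (j, j)) = (\<Sum>p\<in>A \<times> A. f p) \<longleftrightarrow> (\<forall>p\<in>A \<times> A. fst p \<noteq> snd p \<longrightarrow> f p = 0)"
proof -
  let ?D = "{p \<in> A \<times> A. fst p = snd p}"
  have diag: "(\<Sum>j\<in>A. f (j, j)) = sum f ?D"
    using sum_diagonal[OF assms(1), of f] assms(1) by (simp add: sum.inter_filter)
  have split: "sum f (A \<times> A) = sum f ?D + sum f (A \<times> A - ?D)"
    using assms(1) by (subst sum.subset_diff[of ?D]) auto
  have "0 \<le> sum f (A \<times> A - ?D)"
    by (simp add: sum_nonneg nonneg)
  then show "(\<Sum>j\<in>A. f (j, j)) \<le> (\<Sum>p\<in>A \<times> A. f p)"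
    unfolding diag split by simp
  have "sum f (A \<times> A - ?D) = 0 \<longleftrightarrow> (\<forall>p\<in>A \<times> A - ?D. f p = 0)"
    using assms by (intro sum_nonneg_eq_0_iff) auto
  then show "(\<Sum>j\<in>A. f (j, j)) = (\<Sum>p\<in>A \<times> A. f p) \<longleftrightarrow> (\<forall>p\<in>A \<times> A. fst p \<noteq> snd p \<longrightarrow> f p = 0)"
    unfolding diag split by auto
qed

lemma scalar_matrix_iff:
  fixes B :: "nat \<times> nat \<Rightarrow> 'a::zero"
  assumes "0 < n"
  shows "(\<forall>j<n. \<forall>k<n. B (j, j) = B (k, k)) \<and> (\<forall>p\<in>{..<n} \<times> {..<n}. fst p \<noteq> snd p \<longrightarrow> B p = 0)
      \<longleftrightarrow> (\<exists>c. \<forall>p\<in>{..<n} \<times> {..<n}. B p = (if fst p = snd p then c else 0))"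
proof
  assume const: "(\<forall>j<n. \<forall>k<n. B (j, j) = B (k, k)) \<and> (\<forall>p\<in>{..<n} \<times> {..<n}. fst p \<noteq> snd p \<longrightarrow> B p = 0)"
  have "B (j, k) = (if j = k then B (0, 0) else 0)" if "j < n" "k < n" for j k
    using const[THEN conjunct1, rule_format, of j 0] const[THEN conjunct2] that assms by auto
  then have "\<forall>p\<in>{..<n} \<times> {..<n}. B p = (if fst p = snd p then B (0, 0) else 0)"
    by auto
  then show "\<exists>c. \<forall>p\<in>{..<n} \<times> {..<n}. B p = (if fst p = snd p then c else 0)" ..
next
  assume "\<exists>c. \<forall>p\<in>{..<n} \<times> {..<n}. B p = (if fst p = snd p then c else 0)"
  then obtain c where "\<forall>p\<in>{..<n} \<times> {..<n}. B p = (if fst p = snd p then c else 0)" ..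
  then show "(\<forall>j<n. \<forall>k<n. B (j, j) = B (k, k)) \<and> (\<forall>p\<in>{..<n} \<times> {..<n}. fst p \<noteq> snd p \<longrightarrow> B p = 0)"
    by simp
qed

lemma cmod_trace_sq_le:
  fixes B :: "nat \<times> nat \<Rightarrow> complex"
  shows "(cmod (\<Sum>j<n. B (j, j)))\<^sup>2 \<le> real n * (\<Sum>p\<in>{..<n} \<times> {..<n}. (cmod (B p))\<^sup>2)"
proof -
  have "(cmod (\<Sum>j<n. B (j, j)))\<^sup>2 \<le> real n * (\<Sum>j<n. (cmod (B (j, j)))\<^sup>2)"
    by (rule cmod_sum_sq_le)
  also have "\<dots> \<le> real n * (\<Sum>p\<in>{..<n} \<times> {..<n}. (cmod (B p))\<^sup>2)"
    using sum_diagonal_le(1)[of "{..<n}" "\<lambda>p. (cmod (B p))\<^sup>2"] by (simp add: mult_left_mono)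
  finally show ?thesis .
qed

lemma cmod_trace_sq_eq_iff:
  fixes B :: "nat \<times> nat \<Rightarrow> complex"
  shows "(cmod (\<Sum>j<n. B (j, j)))\<^sup>2 = real n * (\<Sum>p\<in>{..<n} \<times> {..<n}. (cmod (B p))\<^sup>2) \<longleftrightarrow>
    (\<exists>c. \<forall>p\<in>{..<n} \<times> {..<n}. B p = (if fst p = snd p then c else 0))"
proof (cases "n = 0")
  case False
  let ?diag = "\<Sum>j<n. (cmod (B (j, j)))\<^sup>2" and ?all = "\<Sum>p\<in>{..<n} \<times> {..<n}. (cmod (B p))\<^sup>2"
  have "(cmod (\<Sum>j<n. B (j, j)))\<^sup>2 \<le> real n * ?diag" "?diag \<le> ?all"
    using cmod_sum_sq_le sum_diagonal_le(1)[of "{..<n}" "\<lambda>p. (cmod (B p))\<^sup>2"] by auto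
  moreover have "real n * ?diag = real n * ?all \<longleftrightarrow> ?diag = ?all"
    using False by simp
  ultimately have trace_eq: "(cmod (\<Sum>j<n. B (j, j)))\<^sup>2 = real n * ?all \<longleftrightarrow>
      (cmod (\<Sum>j<n. B (j, j)))\<^sup>2 = real n * ?diag \<and> ?diag = ?all"
    by (smt (verit) mult_left_mono of_nat_0_le_iff)
  have "?diag = ?all \<longleftrightarrow> (\<forall>p\<in>{..<n} \<times> {..<n}. fst p \<noteq> snd p \<longrightarrow> (cmod (B p))\<^sup>2 = 0)"
    by (rule sum_diagonal_le(2)) auto
  also have "\<dots> \<longleftrightarrow> (\<forall>p\<in>{..<n} \<times> {..<n}. fst p \<noteq> snd p \<longrightarrow> B p = 0)"
    by (simp only: power_eq_0_iff norm_eq_zero zero_less_numeral simp_thms)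
  finally have diag_eq: "?diag = ?all \<longleftrightarrow> (\<forall>p\<in>{..<n} \<times> {..<n}. fst p \<noteq> snd p \<longrightarrow> B p = 0)" .
  show ?thesis
    unfolding trace_eq diag_eq cmod_sum_sq_eq_iff by (rule scalar_matrix_iff) (use False in simp)
qed simp

lemma sum_cmod_trace_sq_le:
  fixes B :: "'q \<Rightarrow> nat \<times> nat \<Rightarrow> complex"
  shows "(\<Sum>q\<in>Q. (cmod (\<Sum>j<n. B q (j, j)))\<^sup>2) \<le> real n * (\<Sum>q\<in>Q. \<Sum>p\<in>{..<n} \<times> {..<n}. (cmod (B q p))\<^sup>2)"
proof -
  have "(\<Sum>q\<in>Q. (cmod (\<Sum>j<n. B q (j, j)))\<^sup>2) \<le> (\<Sum>q\<in>Q. real n * (\<Sum>p\<in>{..<n} \<times> {..<n}. (cmod (B q p))\<^sup>2))"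
    by (rule sum_mono) (rule cmod_trace_sq_le)
  then show ?thesis
    by (simp only: sum_distrib_left)
qed

lemma sum_cmod_trace_sq_eq_iff:
  fixes B :: "'q \<Rightarrow> nat \<times> nat \<Rightarrow> complex"
  assumes "finite Q"
  shows "(\<Sum>q\<in>Q. (cmod (\<Sum>j<n. B q (j, j)))\<^sup>2) = real n * (\<Sum>q\<in>Q. \<Sum>p\<in>{..<n} \<times> {..<n}. (cmod (B q p))\<^sup>2)
    \<longleftrightarrow> (\<forall>q\<in>Q. \<exists>c. \<forall>p\<in>{..<n} \<times> {..<n}. B q p = (if fst p = snd p then c else 0))"
proof -
  have "(\<Sum>q\<in>Q. (cmod (\<Sum>j<n. B q (j, j)))\<^sup>2) = real n * (\<Sum>q\<in>Q. \<Sum>p\<in>{..<n} \<times> {..<n}. (cmod (B q p))\<^sup>2)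
      \<longleftrightarrow> (\<Sum>q\<in>Q. (cmod (\<Sum>j<n. B q (j, j)))\<^sup>2) = (\<Sum>q\<in>Q. real n * (\<Sum>p\<in>{..<n} \<times> {..<n}. (cmod (B q p))\<^sup>2))"
    by (simp only: sum_distrib_left)
  also have "\<dots> \<longleftrightarrow> (\<forall>q\<in>Q. (cmod (\<Sum>j<n. B q (j, j)))\<^sup>2 = real n * (\<Sum>p\<in>{..<n} \<times> {..<n}. (cmod (B q p))\<^sup>2))"
    by (rule sum_eq_sum_iff_of_le[OF assms cmod_trace_sq_le])
  also have "\<dots> \<longleftrightarrow> (\<forall>q\<in>Q. \<exists>c. \<forall>p\<in>{..<n} \<times> {..<n}. B q p = (if fst p = snd p then c else 0))"
    by (simp only: cmod_trace_sq_eq_iff)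
  finally show ?thesis .
qed

lemma wedge_sum_left: "wedge (\<lambda>U. \<Sum>t\<in>I. f t U) \<psi> = (\<lambda>U. \<Sum>t\<in>I. wedge (f t) \<psi> U)"
  unfolding wedge_def by (intro ext) (simp add: sum_distrib_right sum_distrib_left; rule sum.swap)

lemma wedge_sum_right: "wedge \<phi> (\<lambda>U. \<Sum>t\<in>I. f t U) = (\<lambda>U. \<Sum>t\<in>I. wedge \<phi> (f t) U)"
  unfolding wedge_def by (auto simp: sum_distrib_left intro!: ext sum.swap)

lemma wedge_scale_left: "wedge (\<lambda>U. c * \<phi> U) \<psi> = (\<lambda>U. c * wedge \<phi> \<psi> U)"
  unfolding wedge_def by (auto simp: sum_distrib_left intro!: ext sum.cong)

lemma wedge_scale_right: "wedge \<phi> (\<lambda>U. c * \<psi> U) = (\<lambda>U. c * wedge \<phi> \<psi> U)"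
  unfolding wedge_def by (auto simp: sum_distrib_left intro!: ext sum.cong)

lemma wedge_mono_mono:
  assumes "finite S" "finite T"
  shows "wedge (mono S) (mono T) = (\<lambda>U. if S \<inter> T = {} then wsign S T * mono (S \<union> T) U else 0)"
proof (rule ext)
  fix U
  show "wedge (mono S) (mono T) U = (if S \<inter> T = {} then wsign S T * mono (S \<union> T) U else 0)"
  proof (cases "S \<subseteq> U \<and> U - S = T")
    case True
    then have U: "U = S \<union> T"
      by auto
    have "wedge (mono S) (mono T) U = (\<Sum>S'\<in>Pow U. if S' = S then wsign S T else 0)"
      unfolding wedge_def mono_def using True by (intro sum.cong) auto
    also have "\<dots> = wsign S T"
      using True U assms by (subst sum.delta) auto
    finally show ?thesis
      using True assms unfolding mono_def by auto
  next
    case False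
    then have "wedge (mono S) (mono T) U = (\<Sum>S'\<in>Pow U. 0)"
      unfolding wedge_def mono_def by (intro sum.cong) auto
    then show ?thesis
      using False unfolding mono_def by auto
  qed
qed

lemma wsign_eq_card_inversions:
  assumes "{(s, t). s \<in> S \<and> t \<in> T \<and> t < s} = P"
  shows "wsign S T = (-1) ^ card P"
  using assms unfolding wsign_def by simp

lemma wedge_mono_singletons:
  assumes "x < y"
  shows "wedge (mono {x}) (mono {y}) = mono {x, y}"
proof -
  have "wsign {x} {y} = 1"
    using assms by (subst wsign_eq_card_inversions[of _ _ "{}"]) auto
  then show ?thesis
    using assms by (subst wedge_mono_mono) (auto simp: insert_commute)
qed

lemma finner_self: "finner N \<phi> \<phi> = of_real (\<Sum>S\<in>Pow {..<N}. 2 ^ card S * (cmod (\<phi> S))\<^sup>2)"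
  unfolding finner_def of_real_sum
  by (intro sum.cong refl) (simp add: mult.assoc complex_norm_square[symmetric])

lemma fnorm_sq: "(fnorm N \<phi>)\<^sup>2 = (\<Sum>S\<in>Pow {..<N}. 2 ^ card S * (cmod (\<phi> S))\<^sup>2)"
  unfolding fnorm_def finner_self by (simp add: sum_nonneg)

lemma finner_diff_left: "finner N (\<lambda>S. \<phi> S - \<psi> S) \<chi> = finner N \<phi> \<chi> - finner N \<psi> \<chi>"
  unfolding finner_def by (simp add: sum_subtractf[symmetric] algebra_simps)

lemma finner_self_eq_0_iff:
  assumes "supp_in N \<phi>"
  shows "finner N \<phi> \<phi> = 0 \<longleftrightarrow> \<phi> = (\<lambda>_. 0)"
proof
  assume "finner N \<phi> \<phi> = 0"
  then have "(\<Sum>S\<in>Pow {..<N}. 2 ^ card S * (cmod (\<phi> S))\<^sup>2) = 0"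
    using finner_self[of N \<phi>] by (metis of_real_eq_0_iff)
  then have zero: "\<forall>S\<in>Pow {..<N}. 2 ^ card S * (cmod (\<phi> S))\<^sup>2 = 0"
    by (subst (asm) sum_nonneg_eq_0_iff) auto
  show "\<phi> = (\<lambda>_. 0)"
  proof
    fix S
    show "\<phi> S = 0"
    proof (cases "S \<subseteq> {..<N}")
      case True
      then show ?thesis
        using zero by simp
    next
      case False
      then show ?thesis
        using assms unfolding supp_in_def by blast
    qed
  qed
next
  assume "\<phi> = (\<lambda>_. 0)"
  then show "finner N \<phi> \<phi> = 0"
    unfolding finner_def by simp
qed

definition contraction :: "nat \<Rightarrow> form \<Rightarrow> form \<Rightarrow> form" where
  "contraction N \<eta> \<phi> T = (if T \<subseteq> {..<N} then (\<Sum>U\<in>{U\<in>Pow {..<N}. T \<subseteq> U}.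
      of_nat (2 ^ card U) / of_nat (2 ^ card T) * \<phi> U * cnj (wsign (U - T) T * \<eta> (U - T))) else 0)"

lemma contraction_adjoint:
  assumes "supp_in N \<chi>"
  shows "finner N (contraction N \<eta> \<phi>) \<chi> = finner N \<phi> (wedge \<eta> \<chi>)"
proof -
  define F where "F U T = of_nat (2 ^ card U) * \<phi> U * cnj (wsign (U - T) T * \<eta> (U - T)) * cnj (\<chi> T)" for U T
  have "finner N \<phi> (wedge \<eta> \<chi>) = (\<Sum>U\<in>Pow {..<N}. \<Sum>T\<in>{T\<in>Pow {..<N}. T \<subseteq> U}. F U T)"
    unfolding finner_def
  proof (intro sum.cong refl)
    fix U assume U: "U \<in> Pow {..<N}"
    then have "finite U"
      by (auto intro: finite_subset)
    then have "wedge \<eta> \<chi> U = (\<Sum>T\<in>Pow U. wsign (U - T) T * \<eta> (U - T) * \<chi> T)"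
      unfolding wedge_def
      by (intro sum.reindex_bij_witness[of _ "\<lambda>X. U - X" "\<lambda>X. U - X"]) (auto simp: double_diff)
    moreover have "{T\<in>Pow {..<N}. T \<subseteq> U} = Pow U"
      using U by auto
    ultimately show "of_nat (2 ^ card U) * \<phi> U * cnj (wedge \<eta> \<chi> U) = (\<Sum>T\<in>{T\<in>Pow {..<N}. T \<subseteq> U}. F U T)"
      unfolding F_def by (simp add: cnj_sum sum_distrib_left mult.assoc)
  qed
  also have "\<dots> = (\<Sum>T\<in>Pow {..<N}. \<Sum>U\<in>{U\<in>Pow {..<N}. T \<subseteq> U}. F U T)"
    by (rule sum.swap_restrict) auto
  also have "\<dots> = finner N (contraction N \<eta> \<phi>) \<chi>"
    unfolding finner_def
  proof (intro sum.cong refl)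
    fix T assume "T \<in> Pow {..<N}"
    then show "(\<Sum>U\<in>{U\<in>Pow {..<N}. T \<subseteq> U}. F U T) = of_nat (2 ^ card T) * contraction N \<eta> \<phi> T * cnj (\<chi> T)"
      unfolding contraction_def F_def by (simp add: sum_distrib_left sum_distrib_right)
  qed
  finally show ?thesis
    by simp
qed

lemma Lam_eq_contraction: "Lam N \<eta> \<phi> = contraction N \<eta> \<phi>"
  unfolding Lam_def
proof (rule the_equality)
  show "supp_in N (contraction N \<eta> \<phi>) \<and>
      (\<forall>\<chi>. supp_in N \<chi> \<longrightarrow> finner N (contraction N \<eta> \<phi>) \<chi> = finner N \<phi> (wedge \<eta> \<chi>))"
    using contraction_adjoint by (auto simp: supp_in_def contraction_def split: if_splits)
next
  fix \<psi>
  assume \<psi>: "supp_in N \<psi> \<and> (\<forall>\<chi>. supp_in N \<chi> \<longrightarrow> finner N \<psi> \<chi> = finner N \<phi> (wedge \<eta> \<chi>))"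
  define d where "d S = \<psi> S - contraction N \<eta> \<phi> S" for S
  have d: "supp_in N d"
    using \<psi> unfolding d_def supp_in_def contraction_def by auto
  have "finner N d d = finner N \<psi> d - finner N (contraction N \<eta> \<phi>) d"
    unfolding d_def[abs_def] by (rule finner_diff_left)
  also have "\<dots> = 0"
    using \<psi> d contraction_adjoint[OF d] by simp
  finally have "d = (\<lambda>_. 0)"
    using finner_self_eq_0_iff[OF d] by simp
  then have "\<psi> S - contraction N \<eta> \<phi> S = 0" for S
    unfolding d_def by meson
  then show "\<psi> = contraction N \<eta> \<phi>"
    by auto
qed

lemma contraction_mono:
  "contraction N \<eta> (mono U) T = (if T \<subseteq> U \<and> U \<subseteq> {..<N} then
     of_nat (2 ^ card U) / of_nat (2 ^ card T) * cnj (wsign (U - T) T * \<eta> (U - T)) else 0)"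
proof (cases "T \<subseteq> {..<N}")
  case True
  have "contraction N \<eta> (mono U) T = (\<Sum>U'\<in>{U'\<in>Pow {..<N}. T \<subseteq> U'}. if U' = U then
     of_nat (2 ^ card U) / of_nat (2 ^ card T) * cnj (wsign (U - T) T * \<eta> (U - T)) else 0)"
    unfolding contraction_def mono_def using True by (simp only: if_True) (rule sum.cong, auto)
  also have "\<dots> = (if T \<subseteq> U \<and> U \<subseteq> {..<N} then
     of_nat (2 ^ card U) / of_nat (2 ^ card T) * cnj (wsign (U - T) T * \<eta> (U - T)) else 0)"
    by (subst sum.delta) auto
  finally show ?thesis .
qed (auto simp: contraction_def)

definition mono_comb :: "'i set \<Rightarrow> ('i \<Rightarrow> nat set) \<Rightarrow> ('i \<Rightarrow> complex) \<Rightarrow> form" where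
  "mono_comb I X c = (\<lambda>S. \<Sum>t\<in>I. c t * mono (X t) S)"

lemma mono_comb_apply:
  assumes "finite I" "inj_on X I" "t \<in> I"
  shows "mono_comb I X c (X t) = c t"
proof -
  have "mono_comb I X c (X t) = (\<Sum>t'\<in>I. if t' = t then c t' else 0)"
    unfolding mono_comb_def mono_def using assms(2,3) by (intro sum.cong refl) (auto simp: inj_on_eq_iff)
  also have "\<dots> = c t"
    using assms by simp
  finally show ?thesis .
qed

lemma mono_comb_outside:
  assumes "S \<notin> X ` I"
  shows "mono_comb I X c S = 0"
  unfolding mono_comb_def mono_def using assms by (intro sum.neutral) auto

lemma mono_comb_eq_iff:
  assumes "finite I" "inj_on X I"
  shows "mono_comb I X c = mono_comb I X d \<longleftrightarrow> (\<forall>t\<in>I. c t = d t)"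
proof
  assume "mono_comb I X c = mono_comb I X d"
  then show "\<forall>t\<in>I. c t = d t"
    using mono_comb_apply[OF assms] by metis
qed (auto simp: mono_comb_def intro!: sum.cong)

lemma eq_mono_comb_of_support:
  assumes "finite I" "inj_on X I" and supp: "\<And>S. \<phi> S \<noteq> 0 \<Longrightarrow> S \<in> X ` I"
  shows "\<phi> = mono_comb I X (\<lambda>t. \<phi> (X t))"
proof
  fix S
  show "\<phi> S = mono_comb I X (\<lambda>t. \<phi> (X t)) S"
  proof (cases "S \<in> X ` I")
    case True
    then show ?thesis
      using mono_comb_apply[OF assms(1,2)] by auto
  next
    case False
    then show ?thesis
      using supp mono_comb_outside by metis
  qed
qed

lemma fnorm_mono_comb:
  assumes "finite I" "inj_on X I" "\<And>t. t \<in> I \<Longrightarrow> X t \<subseteq> {..<N} \<and> card (X t) = m"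
  shows "(fnorm N (mono_comb I X c))\<^sup>2 = 2 ^ m * (\<Sum>t\<in>I. (cmod (c t))\<^sup>2)"
proof -
  have "(fnorm N (mono_comb I X c))\<^sup>2 = (\<Sum>S\<in>X ` I. 2 ^ card S * (cmod (mono_comb I X c S))\<^sup>2)"
    unfolding fnorm_sq
    by (rule sum.mono_neutral_right) (use assms in \<open>auto simp: mono_comb_outside\<close>)
  also have "\<dots> = (\<Sum>t\<in>I. 2 ^ card (X t) * (cmod (mono_comb I X c (X t)))\<^sup>2)"
    using assms(2) by (simp add: sum.reindex)
  also have "\<dots> = (\<Sum>t\<in>I. 2 ^ m * (cmod (c t))\<^sup>2)"
    using assms by (intro sum.cong refl) (simp add: mono_comb_apply)
  finally show ?thesis
    by (simp add: sum_distrib_left)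
qed

lemma contraction_mono_comb:
  "contraction N \<eta> (mono_comb I X c) T = (\<Sum>t\<in>I. c t * contraction N \<eta> (mono (X t)) T)"
  unfolding contraction_def mono_comb_def
  by (auto simp: sum_distrib_left sum_distrib_right mult.assoc mult.left_commute intro: sum.swap)

lemma wedge_mono_comb_left: "wedge (mono_comb I X c) \<psi> = (\<lambda>U. \<Sum>t\<in>I. c t * wedge (mono (X t)) \<psi> U)"
  unfolding mono_comb_def wedge_sum_left wedge_scale_left ..

lemma wedge_mono_comb_right: "wedge \<phi> (mono_comb I X c) = (\<lambda>U. \<Sum>t\<in>I. c t * wedge \<phi> (mono (X t)) U)"
  unfolding mono_comb_def wedge_sum_right wedge_scale_right ..

text \<open>\<open>idx_V11 n r (j, k)\<close> indexes the monomial \<open>dz\<^sub>j \<and> dz\<^sub>k-bar\<close>,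
  \<open>idx_E11 n r (a, b)\<close> the monomial \<open>dw\<^sub>a \<and> dw\<^sub>b-bar\<close>.\<close>

definition idx_V11 :: "nat \<Rightarrow> nat \<Rightarrow> nat \<times> nat \<Rightarrow> nat set" where
  "idx_V11 n r p = {fst p, n + r + snd p}"

definition idx_E11 :: "nat \<Rightarrow> nat \<Rightarrow> nat \<times> nat \<Rightarrow> nat set" where
  "idx_E11 n r q = {n + fst q, n + r + n + snd q}"

definition idx_VE :: "nat \<Rightarrow> nat \<Rightarrow> (nat \<times> nat) \<times> (nat \<times> nat) \<Rightarrow> nat set" where
  "idx_VE n r pq = idx_V11 n r (fst pq) \<union> idx_E11 n r (snd pq)"

definition curv_coeff :: "(nat \<Rightarrow> nat \<Rightarrow> nat \<Rightarrow> nat \<Rightarrow> complex) \<Rightarrow> nat \<times> nat \<Rightarrow> nat \<times> nat \<Rightarrow> complex" where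
  "curv_coeff A p q = A (fst p) (snd p) (fst q) (snd q)"

lemma inj_on_idx_V11: "inj_on (idx_V11 n r) ({..<n} \<times> {..<n})"
  unfolding inj_on_def idx_V11_def by (auto simp: doubleton_eq_iff prod_eq_iff)

lemma inj_on_idx_E11: "inj_on (idx_E11 n r) ({..<r} \<times> {..<r})"
  unfolding inj_on_def idx_E11_def by (auto simp: doubleton_eq_iff prod_eq_iff)

lemma inj_on_idx_VE: "inj_on (idx_VE n r) (({..<n} \<times> {..<n}) \<times> ({..<r} \<times> {..<r}))"
proof (rule inj_onI, clarsimp)
  fix j k a b j' k' a' b'
  assume "j < n" "k < n" "a < r" "b < r" "j' < n" "k' < n" "a' < r" "b' < r"
    and eq: "idx_VE n r ((j, k), (a, b)) = idx_VE n r ((j', k'), (a', b'))"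
  moreover have "{j, n + r + k, n + a, n + r + n + b} \<subseteq> idx_VE n r ((j', k'), (a', b'))"
    unfolding eq[symmetric] by (auto simp: idx_VE_def idx_V11_def idx_E11_def)
  ultimately show "j = j' \<and> k = k' \<and> a = a' \<and> b = b'"
    by (auto simp: idx_VE_def idx_V11_def idx_E11_def)
qed

lemma idx_VE_subset_card:
  assumes "pq \<in> ({..<n} \<times> {..<n}) \<times> ({..<r} \<times> {..<r})"
  shows "idx_VE n r pq \<subseteq> {..<dimC n r} \<and> card (idx_VE n r pq) = 4"
  using assms unfolding idx_VE_def idx_V11_def idx_E11_def dimC_def by auto

lemma wsign_idx_V11_E11:
  assumes "p \<in> {..<n} \<times> {..<n}" "q \<in> {..<r} \<times> {..<r}"
  shows "wsign (idx_V11 n r p) (idx_E11 n r q) = -1"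
proof -
  have "{(s, t). s \<in> idx_V11 n r p \<and> t \<in> idx_E11 n r q \<and> t < s} = {(n + r + snd p, n + fst q)}"
    using assms by (auto simp: idx_V11_def idx_E11_def)
  then show ?thesis
    by (simp add: wsign_eq_card_inversions)
qed

lemma wsign_idx_E11_V11:
  assumes "p \<in> {..<n} \<times> {..<n}" "q \<in> {..<r} \<times> {..<r}"
  shows "wsign (idx_E11 n r q) (idx_V11 n r p) = -1"
proof -
  let ?inv = "{(n + fst q, fst p), (n + r + n + snd q, fst p), (n + r + n + snd q, n + r + snd p)}"
  have "{(s, t). s \<in> idx_E11 n r q \<and> t \<in> idx_V11 n r p \<and> t < s} = ?inv"
    using assms by (auto simp: idx_V11_def idx_E11_def)
  moreover have "card ?inv = 3"
    using assms by auto
  ultimately show ?thesis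
    by (simp add: wsign_eq_card_inversions)
qed

lemma wedge_mono_idx_V11_E11:
  assumes "p \<in> {..<n} \<times> {..<n}" "q \<in> {..<r} \<times> {..<r}"
  shows "wedge (mono (idx_V11 n r p)) (mono (idx_E11 n r q)) = (\<lambda>U. - mono (idx_VE n r (p, q)) U)"
proof -
  have "idx_V11 n r p \<inter> idx_E11 n r q = {}"
    using assms by (auto simp: idx_V11_def idx_E11_def)
  then show ?thesis
    using wsign_idx_V11_E11[OF assms]
    by (subst wedge_mono_mono) (auto simp: idx_V11_def idx_E11_def idx_VE_def)
qed

lemma wedge_mono_idx_E11_V11:
  assumes "p \<in> {..<n} \<times> {..<n}" "q \<in> {..<r} \<times> {..<r}"
  shows "wedge (mono (idx_E11 n r q)) (mono (idx_V11 n r p)) = (\<lambda>U. - mono (idx_VE n r (p, q)) U)"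
proof -
  have "idx_E11 n r q \<inter> idx_V11 n r p = {}"
    using assms by (auto simp: idx_V11_def idx_E11_def)
  moreover have "idx_E11 n r q \<union> idx_V11 n r p = idx_VE n r (p, q)"
    by (auto simp: idx_VE_def)
  ultimately show ?thesis
    using wsign_idx_E11_V11[OF assms]
    by (subst wedge_mono_mono) (auto simp: idx_V11_def idx_E11_def)
qed

lemma omegaV_eq_mono_comb: "omegaV n r = mono_comb {..<n} (\<lambda>l. idx_V11 n r (l, l)) (\<lambda>_. \<i> / 2)"
  unfolding omegaV_def mono_comb_def idx_V11_def by (intro ext sum.cong refl) (simp add: wedge_mono_singletons)

lemma hE_eq_mono_comb: "hE n r = mono_comb {..<r} (\<lambda>a. idx_E11 n r (a, a)) (\<lambda>_. \<i> / 2)"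
  unfolding hE_def mono_comb_def idx_E11_def by (intro ext sum.cong refl) (simp add: wedge_mono_singletons)

lemma wedge_curv_monomial:
  assumes "j < n" "k < n" "a < r" "b < r"
  shows "wedge (fscale \<i> (wedge (mono {j}) (mono {n+r+k}))) (fscale \<i> (wedge (mono {n+a}) (mono {n+r+n+b})))
     = mono (idx_VE n r ((j, k), (a, b)))"
proof -
  have "fscale \<i> (wedge (mono {x}) (mono {y})) = (\<lambda>U. \<i> * mono {x, y} U)" if "x < y" for x y
    unfolding fscale_def wedge_mono_singletons[OF that] ..
  then have "wedge (fscale \<i> (wedge (mono {j}) (mono {n+r+k}))) (fscale \<i> (wedge (mono {n+a}) (mono {n+r+n+b})))
      = (\<lambda>U. \<i> * (\<i> * wedge (mono (idx_V11 n r (j, k))) (mono (idx_E11 n r (a, b))) U))"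
    using assms by (simp add: wedge_scale_left wedge_scale_right idx_V11_def idx_E11_def)
  then show ?thesis
    using assms by (simp add: wedge_mono_idx_V11_E11)
qed

lemma curv_form_eq_mono_comb:
  "curv_form n r A = mono_comb (({..<n} \<times> {..<n}) \<times> ({..<r} \<times> {..<r})) (idx_VE n r)
     (\<lambda>pq. curv_coeff A (fst pq) (snd pq))"
  unfolding curv_form_def mono_comb_def
  by (intro ext) (simp add: sum.cartesian_product' wedge_curv_monomial curv_coeff_def)

lemma fnorm_curv_form:
  "(fnorm (dimC n r) (curv_form n r A))\<^sup>2 =
     16 * (\<Sum>pq\<in>({..<n} \<times> {..<n}) \<times> ({..<r} \<times> {..<r}). (cmod (curv_coeff A (fst pq) (snd pq)))\<^sup>2)"
  unfolding curv_form_eq_mono_comb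
  by (subst fnorm_mono_comb[where m = 4]) (simp_all add: inj_on_idx_VE idx_VE_subset_card)

lemma idx_VE_diff_eq_idx_V11_iff:
  assumes "p \<in> {..<n} \<times> {..<n}" "q \<in> {..<r} \<times> {..<r}" "l < n" "T \<subseteq> idx_VE n r (p, q)"
  shows "idx_VE n r (p, q) - T = idx_V11 n r (l, l) \<longleftrightarrow> p = (l, l) \<and> T = idx_E11 n r q"
proof
  assume diff: "idx_VE n r (p, q) - T = idx_V11 n r (l, l)"
  then have "l \<in> idx_VE n r (p, q)" "n + r + l \<in> idx_VE n r (p, q)"
    by (auto simp: idx_V11_def)
  then have p: "p = (l, l)"
    using assms(1-3) by (auto simp: idx_VE_def idx_V11_def idx_E11_def)
  have "T = idx_VE n r (p, q) - (idx_VE n r (p, q) - T)"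
    using assms(4) by auto
  also have "\<dots> = idx_E11 n r q"
    unfolding diff using assms p by (auto simp: idx_VE_def idx_V11_def idx_E11_def)
  finally show "p = (l, l) \<and> T = idx_E11 n r q"
    using p by simp
qed (use assms in \<open>auto simp: idx_VE_def idx_V11_def idx_E11_def\<close>)

lemma idx_VE_diff_eq_idx_E11_iff:
  assumes "p \<in> {..<n} \<times> {..<n}" "q \<in> {..<r} \<times> {..<r}" "a < r" "T \<subseteq> idx_VE n r (p, q)"
  shows "idx_VE n r (p, q) - T = idx_E11 n r (a, a) \<longleftrightarrow> q = (a, a) \<and> T = idx_V11 n r p"
proof
  assume diff: "idx_VE n r (p, q) - T = idx_E11 n r (a, a)"
  then have "n + a \<in> idx_VE n r (p, q)" "n + r + n + a \<in> idx_VE n r (p, q)"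
    by (auto simp: idx_E11_def)
  then have q: "q = (a, a)"
    using assms(1-3) by (auto simp: idx_VE_def idx_V11_def idx_E11_def)
  have "T = idx_VE n r (p, q) - (idx_VE n r (p, q) - T)"
    using assms(4) by auto
  also have "\<dots> = idx_V11 n r p"
    unfolding diff using assms q by (auto simp: idx_VE_def idx_V11_def idx_E11_def)
  finally show "q = (a, a) \<and> T = idx_V11 n r p"
    using q by simp
qed (use assms in \<open>auto simp: idx_VE_def idx_V11_def idx_E11_def\<close>)

lemma omegaV_idx_VE_diff:
  assumes "p \<in> {..<n} \<times> {..<n}" "q \<in> {..<r} \<times> {..<r}" "T \<subseteq> idx_VE n r (p, q)"
  shows "omegaV n r (idx_VE n r (p, q) - T) = (if fst p = snd p \<and> T = idx_E11 n r q then \<i> / 2 else 0)"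
proof (cases "fst p = snd p \<and> T = idx_E11 n r q")
  case True
  then obtain l where p: "p = (l, l)"
    by (metis prod.collapse)
  have l: "l < n"
    using assms(1) p by simp
  have diff: "idx_VE n r (p, q) - T = idx_V11 n r (l, l)"
    using idx_VE_diff_eq_idx_V11_iff[OF assms(1,2) l assms(3)] p True by simp
  have inj: "inj_on (\<lambda>l. idx_V11 n r (l, l)) {..<n}"
    by (auto simp: inj_on_def idx_V11_def)
  show ?thesis
    unfolding omegaV_eq_mono_comb diff using True l by (subst mono_comb_apply[OF _ inj]) auto
next
  case False
  then have "idx_VE n r (p, q) - T \<noteq> idx_V11 n r (l, l)" if "l < n" for l
    using idx_VE_diff_eq_idx_V11_iff[OF assms(1,2) that assms(3)] by auto
  then have "omegaV n r (idx_VE n r (p, q) - T) = 0"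
    unfolding omegaV_eq_mono_comb by (intro mono_comb_outside) auto
  then show ?thesis
    by (simp only: if_not_P[OF False])
qed

lemma contraction_omegaV_mono:
  assumes "p \<in> {..<n} \<times> {..<n}" "q \<in> {..<r} \<times> {..<r}"
  shows "contraction (dimC n r) (omegaV n r) (mono (idx_VE n r (p, q))) T =
    (if fst p = snd p \<and> T = idx_E11 n r q then 2 * \<i> else 0)"
proof (cases "fst p = snd p \<and> T = idx_E11 n r q")
  case True
  then obtain l where p: "p = (l, l)" and T: "T = idx_E11 n r q"
    by (metis prod.collapse)
  have sub: "T \<subseteq> idx_VE n r (p, q)"
    using T by (auto simp: idx_VE_def)
  have diff: "idx_VE n r (p, q) - T = idx_V11 n r (l, l)"
    using assms p T by (auto simp: idx_VE_def idx_V11_def idx_E11_def)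
  have val: "omegaV n r (idx_V11 n r (l, l)) = \<i> / 2"
    using omegaV_idx_VE_diff[OF assms sub] True diff by simp
  have sign: "wsign (idx_V11 n r (l, l)) T = -1"
    using wsign_idx_V11_E11[of "(l, l)" n q r] assms p T by simp
  have card: "card T = 2"
    using T assms by (auto simp: idx_E11_def)
  have "contraction (dimC n r) (omegaV n r) (mono (idx_VE n r (p, q))) T = of_nat (2 ^ 4) / of_nat (2 ^ 2) * cnj (- 1 * (\<i> / 2))"
    unfolding contraction_mono diff val sign card using sub idx_VE_subset_card[of "(p, q)" n r] assms by simp
  then show ?thesis
    using True by simp
next
  case False
  have "contraction (dimC n r) (omegaV n r) (mono (idx_VE n r (p, q))) T = 0"
  proof (cases "T \<subseteq> idx_VE n r (p, q)")
    case True
    then have "omegaV n r (idx_VE n r (p, q) - T) = 0"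
      using omegaV_idx_VE_diff[OF assms True] by (simp only: if_not_P[OF False])
    then show ?thesis
      unfolding contraction_mono by simp
  qed (simp add: contraction_mono)
  then show ?thesis
    by (simp only: if_not_P[OF False])
qed

lemma hE_idx_VE_diff:
  assumes "p \<in> {..<n} \<times> {..<n}" "q \<in> {..<r} \<times> {..<r}" "T \<subseteq> idx_VE n r (p, q)"
  shows "hE n r (idx_VE n r (p, q) - T) = (if fst q = snd q \<and> T = idx_V11 n r p then \<i> / 2 else 0)"
proof (cases "fst q = snd q \<and> T = idx_V11 n r p")
  case True
  then obtain l where q: "q = (l, l)"
    by (metis prod.collapse)
  have l: "l < r"
    using assms(2) q by simp
  have diff: "idx_VE n r (p, q) - T = idx_E11 n r (l, l)"
    using idx_VE_diff_eq_idx_E11_iff[OF assms(1,2) l assms(3)] q True by simp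
  have inj: "inj_on (\<lambda>l. idx_E11 n r (l, l)) {..<r}"
    by (auto simp: inj_on_def idx_E11_def)
  show ?thesis
    unfolding hE_eq_mono_comb diff using True l by (subst mono_comb_apply[OF _ inj]) auto
next
  case False
  then have "idx_VE n r (p, q) - T \<noteq> idx_E11 n r (l, l)" if "l < r" for l
    using idx_VE_diff_eq_idx_E11_iff[OF assms(1,2) that assms(3)] by auto
  then have "hE n r (idx_VE n r (p, q) - T) = 0"
    unfolding hE_eq_mono_comb by (intro mono_comb_outside) auto
  then show ?thesis
    by (simp only: if_not_P[OF False])
qed

lemma contraction_hE_mono:
  assumes "p \<in> {..<n} \<times> {..<n}" "q \<in> {..<r} \<times> {..<r}"
  shows "contraction (dimC n r) (hE n r) (mono (idx_VE n r (p, q))) T =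
    (if fst q = snd q \<and> T = idx_V11 n r p then 2 * \<i> else 0)"
proof (cases "fst q = snd q \<and> T = idx_V11 n r p")
  case True
  then obtain l where q: "q = (l, l)" and T: "T = idx_V11 n r p"
    by (metis prod.collapse)
  have sub: "T \<subseteq> idx_VE n r (p, q)"
    using T by (auto simp: idx_VE_def)
  have diff: "idx_VE n r (p, q) - T = idx_E11 n r (l, l)"
    using assms q T by (auto simp: idx_VE_def idx_V11_def idx_E11_def)
  have val: "hE n r (idx_E11 n r (l, l)) = \<i> / 2"
    using hE_idx_VE_diff[OF assms sub] True diff by simp
  have sign: "wsign (idx_E11 n r (l, l)) T = -1"
    using wsign_idx_E11_V11[of p n "(l, l)" r] assms q T by simp
  have card: "card T = 2"
    using T assms by (auto simp: idx_V11_def)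
  have "contraction (dimC n r) (hE n r) (mono (idx_VE n r (p, q))) T = of_nat (2 ^ 4) / of_nat (2 ^ 2) * cnj (- 1 * (\<i> / 2))"
    unfolding contraction_mono diff val sign card using sub idx_VE_subset_card[of "(p, q)" n r] assms by simp
  then show ?thesis
    using True by simp
next
  case False
  have "contraction (dimC n r) (hE n r) (mono (idx_VE n r (p, q))) T = 0"
  proof (cases "T \<subseteq> idx_VE n r (p, q)")
    case True
    then have "hE n r (idx_VE n r (p, q) - T) = 0"
      using hE_idx_VE_diff[OF assms True] by (simp only: if_not_P[OF False])
    then show ?thesis
      unfolding contraction_mono by simp
  qed (simp add: contraction_mono)
  then show ?thesis
    by (simp only: if_not_P[OF False])
qed

lemma Lam_omegaV_curv_form:
  "Lam (dimC n r) (omegaV n r) (curv_form n r A) =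
     mono_comb ({..<r} \<times> {..<r}) (idx_E11 n r) (\<lambda>q. 2 * \<i> * (\<Sum>j<n. curv_coeff A (j, j) q))"
proof
  fix T
  have "Lam (dimC n r) (omegaV n r) (curv_form n r A) T =
      (\<Sum>pq\<in>({..<n} \<times> {..<n}) \<times> ({..<r} \<times> {..<r}). curv_coeff A (fst pq) (snd pq) *
         (if fst (fst pq) = snd (fst pq) \<and> T = idx_E11 n r (snd pq) then 2 * \<i> else 0))"
    unfolding Lam_eq_contraction curv_form_eq_mono_comb contraction_mono_comb
    by (intro sum.cong refl) (clarsimp simp: contraction_omegaV_mono)
  also have "\<dots> = (\<Sum>q\<in>{..<r} \<times> {..<r}. \<Sum>p\<in>{..<n} \<times> {..<n}.
      if fst p = snd p then curv_coeff A p q * (if T = idx_E11 n r q then 2 * \<i> else 0) else 0)"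
    unfolding sum_Times_swap by (intro sum.cong refl) simp
  also have "\<dots> = mono_comb ({..<r} \<times> {..<r}) (idx_E11 n r) (\<lambda>q. 2 * \<i> * (\<Sum>j<n. curv_coeff A (j, j) q)) T"
    unfolding mono_comb_def mono_def by (simp add: sum_diagonal sum_distrib_left; intro sum.cong refl; simp add: mult.commute)
  finally show "Lam (dimC n r) (omegaV n r) (curv_form n r A) T =
      mono_comb ({..<r} \<times> {..<r}) (idx_E11 n r) (\<lambda>q. 2 * \<i> * (\<Sum>j<n. curv_coeff A (j, j) q)) T" .
qed

lemma Lam_hE_curv_form:
  "Lam (dimC n r) (hE n r) (curv_form n r A) =
     mono_comb ({..<n} \<times> {..<n}) (idx_V11 n r) (\<lambda>p. 2 * \<i> * (\<Sum>a<r. curv_coeff A p (a, a)))"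
proof
  fix T
  have "Lam (dimC n r) (hE n r) (curv_form n r A) T =
      (\<Sum>pq\<in>({..<n} \<times> {..<n}) \<times> ({..<r} \<times> {..<r}). curv_coeff A (fst pq) (snd pq) *
         (if fst (snd pq) = snd (snd pq) \<and> T = idx_V11 n r (fst pq) then 2 * \<i> else 0))"
    unfolding Lam_eq_contraction curv_form_eq_mono_comb contraction_mono_comb
    by (intro sum.cong refl) (clarsimp simp: contraction_hE_mono)
  also have "\<dots> = (\<Sum>p\<in>{..<n} \<times> {..<n}. \<Sum>q\<in>{..<r} \<times> {..<r}.
      if fst q = snd q then curv_coeff A p q * (if T = idx_V11 n r p then 2 * \<i> else 0) else 0)"
    unfolding sum.cartesian_product' by (intro sum.cong refl) simp
  also have "\<dots> = mono_comb ({..<n} \<times> {..<n}) (idx_V11 n r) (\<lambda>p. 2 * \<i> * (\<Sum>a<r. curv_coeff A p (a, a))) T"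
    unfolding mono_comb_def mono_def by (simp add: sum_diagonal sum_distrib_left; intro sum.cong refl; simp add: mult.commute)
  finally show "Lam (dimC n r) (hE n r) (curv_form n r A) T =
      mono_comb ({..<n} \<times> {..<n}) (idx_V11 n r) (\<lambda>p. 2 * \<i> * (\<Sum>a<r. curv_coeff A p (a, a))) T" .
qed

lemma fnorm_Lam_omegaV_curv_form:
  "(fnorm (dimC n r) (Lam (dimC n r) (omegaV n r) (curv_form n r A)))\<^sup>2 =
     16 * (\<Sum>q\<in>{..<r} \<times> {..<r}. (cmod (\<Sum>j<n. curv_coeff A (j, j) q))\<^sup>2)"
proof -
  have "idx_E11 n r q \<subseteq> {..<dimC n r} \<and> card (idx_E11 n r q) = 2" if "q \<in> {..<r} \<times> {..<r}" for q
    using that by (auto simp: idx_E11_def dimC_def)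
  then show ?thesis
    unfolding Lam_omegaV_curv_form
    by (subst fnorm_mono_comb[where m = 2]) (simp_all add: inj_on_idx_E11 norm_mult power_mult_distrib sum_distrib_left[symmetric])
qed

lemma fnorm_Lam_hE_curv_form:
  "(fnorm (dimC n r) (Lam (dimC n r) (hE n r) (curv_form n r A)))\<^sup>2 =
     16 * (\<Sum>p\<in>{..<n} \<times> {..<n}. (cmod (\<Sum>a<r. curv_coeff A p (a, a)))\<^sup>2)"
proof -
  have "idx_V11 n r p \<subseteq> {..<dimC n r} \<and> card (idx_V11 n r p) = 2" if "p \<in> {..<n} \<times> {..<n}" for p
    using that by (auto simp: idx_V11_def dimC_def)
  then show ?thesis
    unfolding Lam_hE_curv_form
    by (subst fnorm_mono_comb[where m = 2]) (simp_all add: inj_on_idx_V11 norm_mult power_mult_distrib sum_distrib_left[symmetric])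
qed

lemma wedge_mono_comb_omegaV:
  "wedge (mono_comb ({..<r} \<times> {..<r}) (idx_E11 n r) c) (omegaV n r) =
     mono_comb (({..<n} \<times> {..<n}) \<times> ({..<r} \<times> {..<r})) (idx_VE n r)
       (\<lambda>pq. if fst (fst pq) = snd (fst pq) then - (\<i> / 2) * c (snd pq) else 0)"
proof
  fix U
  have "wedge (mono_comb ({..<r} \<times> {..<r}) (idx_E11 n r) c) (omegaV n r) U =
      (\<Sum>q\<in>{..<r} \<times> {..<r}. \<Sum>l<n. - (\<i> / 2) * c q * mono (idx_VE n r ((l, l), q)) U)"
    unfolding wedge_mono_comb_left
  proof (intro sum.cong refl)
    fix q assume "q \<in> {..<r} \<times> {..<r}"
    then show "c q * wedge (mono (idx_E11 n r q)) (omegaV n r) U =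
        (\<Sum>l<n. - (\<i> / 2) * c q * mono (idx_VE n r ((l, l), q)) U)"
      unfolding omegaV_eq_mono_comb wedge_mono_comb_right
      by (simp add: wedge_mono_idx_E11_V11 sum_distrib_left mult_ac)
  qed
  also have "\<dots> = (\<Sum>q\<in>{..<r} \<times> {..<r}. \<Sum>p\<in>{..<n} \<times> {..<n}.
      if fst p = snd p then - (\<i> / 2) * c q * mono (idx_VE n r (p, q)) U else 0)"
    by (simp add: sum_diagonal)
  also have "\<dots> = mono_comb (({..<n} \<times> {..<n}) \<times> ({..<r} \<times> {..<r})) (idx_VE n r)
       (\<lambda>pq. if fst (fst pq) = snd (fst pq) then - (\<i> / 2) * c (snd pq) else 0) U"
    unfolding mono_comb_def sum_Times_swap by (intro sum.cong refl) simp
  finally show "wedge (mono_comb ({..<r} \<times> {..<r}) (idx_E11 n r) c) (omegaV n r) U =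
      mono_comb (({..<n} \<times> {..<n}) \<times> ({..<r} \<times> {..<r})) (idx_VE n r)
       (\<lambda>pq. if fst (fst pq) = snd (fst pq) then - (\<i> / 2) * c (snd pq) else 0) U" .
qed

lemma wedge_mono_comb_hE:
  "wedge (mono_comb ({..<n} \<times> {..<n}) (idx_V11 n r) c) (hE n r) =
     mono_comb (({..<n} \<times> {..<n}) \<times> ({..<r} \<times> {..<r})) (idx_VE n r)
       (\<lambda>pq. if fst (snd pq) = snd (snd pq) then - (\<i> / 2) * c (fst pq) else 0)"
proof
  fix U
  have "wedge (mono_comb ({..<n} \<times> {..<n}) (idx_V11 n r) c) (hE n r) U =
      (\<Sum>p\<in>{..<n} \<times> {..<n}. \<Sum>a<r. - (\<i> / 2) * c p * mono (idx_VE n r (p, (a, a))) U)"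
    unfolding wedge_mono_comb_left
  proof (intro sum.cong refl)
    fix p assume "p \<in> {..<n} \<times> {..<n}"
    then show "c p * wedge (mono (idx_V11 n r p)) (hE n r) U =
        (\<Sum>a<r. - (\<i> / 2) * c p * mono (idx_VE n r (p, (a, a))) U)"
      unfolding hE_eq_mono_comb wedge_mono_comb_right
      by (simp add: wedge_mono_idx_V11_E11 sum_distrib_left mult_ac)
  qed
  also have "\<dots> = (\<Sum>p\<in>{..<n} \<times> {..<n}. \<Sum>q\<in>{..<r} \<times> {..<r}.
      if fst q = snd q then - (\<i> / 2) * c p * mono (idx_VE n r (p, q)) U else 0)"
    by (simp add: sum_diagonal)
  also have "\<dots> = mono_comb (({..<n} \<times> {..<n}) \<times> ({..<r} \<times> {..<r})) (idx_VE n r)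
       (\<lambda>pq. if fst (snd pq) = snd (snd pq) then - (\<i> / 2) * c (fst pq) else 0) U"
    unfolding mono_comb_def sum.cartesian_product' by (intro sum.cong refl) simp
  finally show "wedge (mono_comb ({..<n} \<times> {..<n}) (idx_V11 n r) c) (hE n r) U =
      mono_comb (({..<n} \<times> {..<n}) \<times> ({..<r} \<times> {..<r})) (idx_VE n r)
       (\<lambda>pq. if fst (snd pq) = snd (snd pq) then - (\<i> / 2) * c (fst pq) else 0) U" .
qed

lemma pullback_E11_iff_support:
  "pullback_E11 n r u \<longleftrightarrow> (\<forall>S. u S \<noteq> 0 \<longrightarrow> S \<in> idx_E11 n r ` ({..<r} \<times> {..<r}))"
  unfolding pullback_E11_def idx_E11_def by (auto simp: image_iff Bex_def)

lemma pullback_V11_iff_support: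
  "pullback_V11 n r v \<longleftrightarrow> (\<forall>S. v S \<noteq> 0 \<longrightarrow> S \<in> idx_V11 n r ` ({..<n} \<times> {..<n}))"
  unfolding pullback_V11_def idx_V11_def by (auto simp: image_iff Bex_def)

lemma curv_form_eq_wedge_omegaV_iff:
  "(\<exists>u. pullback_E11 n r u \<and> curv_form n r A = wedge u (omegaV n r)) \<longleftrightarrow>
   (\<forall>q\<in>{..<r} \<times> {..<r}. \<exists>c. \<forall>p\<in>{..<n} \<times> {..<n}. curv_coeff A p q = (if fst p = snd p then c else 0))"
proof
  assume "\<exists>u. pullback_E11 n r u \<and> curv_form n r A = wedge u (omegaV n r)"
  then obtain u where u: "pullback_E11 n r u" and R: "curv_form n r A = wedge u (omegaV n r)"
    by blast
  have "u = mono_comb ({..<r} \<times> {..<r}) (idx_E11 n r) (\<lambda>q. u (idx_E11 n r q))"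
    using u unfolding pullback_E11_iff_support by (intro eq_mono_comb_of_support) (auto simp: inj_on_idx_E11)
  with R have "curv_form n r A = wedge (mono_comb ({..<r} \<times> {..<r}) (idx_E11 n r) (\<lambda>q. u (idx_E11 n r q))) (omegaV n r)"
    by simp
  then have coeff: "\<forall>pq\<in>({..<n} \<times> {..<n}) \<times> ({..<r} \<times> {..<r}). curv_coeff A (fst pq) (snd pq) =
      (if fst (fst pq) = snd (fst pq) then - (\<i> / 2) * u (idx_E11 n r (snd pq)) else 0)"
    unfolding curv_form_eq_mono_comb wedge_mono_comb_omegaV by (simp add: mono_comb_eq_iff inj_on_idx_VE)
  show "\<forall>q\<in>{..<r} \<times> {..<r}. \<exists>c. \<forall>p\<in>{..<n} \<times> {..<n}. curv_coeff A p q = (if fst p = snd p then c else 0)"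
  proof
    fix q assume "q \<in> {..<r} \<times> {..<r}"
    then have "\<forall>p\<in>{..<n} \<times> {..<n}. curv_coeff A p q = (if fst p = snd p then - (\<i> / 2) * u (idx_E11 n r q) else 0)"
      using coeff by auto
    then show "\<exists>c. \<forall>p\<in>{..<n} \<times> {..<n}. curv_coeff A p q = (if fst p = snd p then c else 0)" ..
  qed
next
  assume "\<forall>q\<in>{..<r} \<times> {..<r}. \<exists>c. \<forall>p\<in>{..<n} \<times> {..<n}. curv_coeff A p q = (if fst p = snd p then c else 0)"
  then have "\<exists>c. \<forall>q\<in>{..<r} \<times> {..<r}. \<forall>p\<in>{..<n} \<times> {..<n}. curv_coeff A p q = (if fst p = snd p then c q else 0)"
    by (rule bchoice)
  then obtain c where c: "\<forall>q\<in>{..<r} \<times> {..<r}. \<forall>p\<in>{..<n} \<times> {..<n}. curv_coeff A p q = (if fst p = snd p then c q else 0)" ..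
  define u where "u = mono_comb ({..<r} \<times> {..<r}) (idx_E11 n r) (\<lambda>q. 2 * \<i> * c q)"
  have "pullback_E11 n r u"
    unfolding pullback_E11_iff_support u_def using mono_comb_outside by metis
  moreover have "curv_form n r A = wedge u (omegaV n r)"
    unfolding u_def curv_form_eq_mono_comb wedge_mono_comb_omegaV using c by (auto simp: mono_comb_eq_iff inj_on_idx_VE)
  ultimately show "\<exists>u. pullback_E11 n r u \<and> curv_form n r A = wedge u (omegaV n r)"
    by blast
qed

lemma curv_form_eq_wedge_hE_iff:
  "(\<exists>v. pullback_V11 n r v \<and> curv_form n r A = wedge v (hE n r)) \<longleftrightarrow>
   (\<forall>p\<in>{..<n} \<times> {..<n}. \<exists>c. \<forall>q\<in>{..<r} \<times> {..<r}. curv_coeff A p q = (if fst q = snd q then c else 0))"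
proof
  assume "\<exists>v. pullback_V11 n r v \<and> curv_form n r A = wedge v (hE n r)"
  then obtain v where v: "pullback_V11 n r v" and R: "curv_form n r A = wedge v (hE n r)"
    by blast
  have "v = mono_comb ({..<n} \<times> {..<n}) (idx_V11 n r) (\<lambda>p. v (idx_V11 n r p))"
    using v unfolding pullback_V11_iff_support by (intro eq_mono_comb_of_support) (auto simp: inj_on_idx_V11)
  with R have "curv_form n r A = wedge (mono_comb ({..<n} \<times> {..<n}) (idx_V11 n r) (\<lambda>p. v (idx_V11 n r p))) (hE n r)"
    by simp
  then have coeff: "\<forall>pq\<in>({..<n} \<times> {..<n}) \<times> ({..<r} \<times> {..<r}). curv_coeff A (fst pq) (snd pq) =
      (if fst (snd pq) = snd (snd pq) then - (\<i> / 2) * v (idx_V11 n r (fst pq)) else 0)"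
    unfolding curv_form_eq_mono_comb wedge_mono_comb_hE by (simp add: mono_comb_eq_iff inj_on_idx_VE)
  show "\<forall>p\<in>{..<n} \<times> {..<n}. \<exists>c. \<forall>q\<in>{..<r} \<times> {..<r}. curv_coeff A p q = (if fst q = snd q then c else 0)"
  proof
    fix p assume "p \<in> {..<n} \<times> {..<n}"
    then have "\<forall>q\<in>{..<r} \<times> {..<r}. curv_coeff A p q = (if fst q = snd q then - (\<i> / 2) * v (idx_V11 n r p) else 0)"
      using coeff by auto
    then show "\<exists>c. \<forall>q\<in>{..<r} \<times> {..<r}. curv_coeff A p q = (if fst q = snd q then c else 0)" ..
  qed
next
  assume "\<forall>p\<in>{..<n} \<times> {..<n}. \<exists>c. \<forall>q\<in>{..<r} \<times> {..<r}. curv_coeff A p q = (if fst q = snd q then c else 0)"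
  then have "\<exists>c. \<forall>p\<in>{..<n} \<times> {..<n}. \<forall>q\<in>{..<r} \<times> {..<r}. curv_coeff A p q = (if fst q = snd q then c p else 0)"
    by (rule bchoice)
  then obtain c where c: "\<forall>p\<in>{..<n} \<times> {..<n}. \<forall>q\<in>{..<r} \<times> {..<r}. curv_coeff A p q = (if fst q = snd q then c p else 0)" ..
  define v where "v = mono_comb ({..<n} \<times> {..<n}) (idx_V11 n r) (\<lambda>p. 2 * \<i> * c p)"
  have "pullback_V11 n r v"
    unfolding pullback_V11_iff_support v_def using mono_comb_outside by metis
  moreover have "curv_form n r A = wedge v (hE n r)"
    unfolding v_def curv_form_eq_mono_comb wedge_mono_comb_hE using c by (auto simp: mono_comb_eq_iff inj_on_idx_VE)
  ultimately show "\<exists>v. pullback_V11 n r v \<and> curv_form n r A = wedge v (hE n r)"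
    by blast
qed

lemma fnorm_Lam_omegaV_curv_form_le:
  "(fnorm (dimC n r) (Lam (dimC n r) (omegaV n r) (curv_form n r A)))\<^sup>2 \<le> real n * (fnorm (dimC n r) (curv_form n r A))\<^sup>2"
  using sum_cmod_trace_sq_le[where B = "\<lambda>q p. curv_coeff A p q" and Q = "{..<r} \<times> {..<r}" and n = n]
  unfolding fnorm_Lam_omegaV_curv_form fnorm_curv_form sum_Times_swap by (simp add: mult.left_commute)

lemma fnorm_Lam_omegaV_curv_form_eq_iff:
  "(fnorm (dimC n r) (Lam (dimC n r) (omegaV n r) (curv_form n r A)))\<^sup>2 = real n * (fnorm (dimC n r) (curv_form n r A))\<^sup>2
    \<longleftrightarrow> (\<exists>u. pullback_E11 n r u \<and> curv_form n r A = wedge u (omegaV n r))"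
  using sum_cmod_trace_sq_eq_iff[where B = "\<lambda>q p. curv_coeff A p q" and Q = "{..<r} \<times> {..<r}" and n = n]
  unfolding curv_form_eq_wedge_omegaV_iff fnorm_Lam_omegaV_curv_form fnorm_curv_form sum_Times_swap
  by (simp add: mult.left_commute)

lemma fnorm_Lam_hE_curv_form_le:
  "(fnorm (dimC n r) (Lam (dimC n r) (hE n r) (curv_form n r A)))\<^sup>2 \<le> real r * (fnorm (dimC n r) (curv_form n r A))\<^sup>2"
  using sum_cmod_trace_sq_le[where B = "curv_coeff A" and Q = "{..<n} \<times> {..<n}" and n = r]
  unfolding fnorm_Lam_hE_curv_form fnorm_curv_form sum.cartesian_product' by (simp add: mult.left_commute)

lemma fnorm_Lam_hE_curv_form_eq_iff:
  "(fnorm (dimC n r) (Lam (dimC n r) (hE n r) (curv_form n r A)))\<^sup>2 = real r * (fnorm (dimC n r) (curv_form n r A))\<^sup>2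
    \<longleftrightarrow> (\<exists>v. pullback_V11 n r v \<and> curv_form n r A = wedge v (hE n r))"
  using sum_cmod_trace_sq_eq_iff[where B = "curv_coeff A" and Q = "{..<n} \<times> {..<n}" and n = r]
  unfolding curv_form_eq_wedge_hE_iff fnorm_Lam_hE_curv_form fnorm_curv_form sum.cartesian_product'
  by (simp add: mult.left_commute)

theorem proposition2p2:
  fixes n r :: nat and A :: "nat \<Rightarrow> nat \<Rightarrow> nat \<Rightarrow> nat \<Rightarrow> complex"
  assumes "herm_coeffs n r A"
  defines "R \<equiv> curv_form n r A"
  defines "c1 \<equiv> Lam (dimC n r) (hE n r) (curv_form n r A)"
  shows "(fnorm (dimC n r) (Lam (dimC n r) (omegaV n r) R))\<^sup>2 \<le> real n * (fnorm (dimC n r) R)\<^sup>2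
       \<and> (fnorm (dimC n r) c1)\<^sup>2 = (fnorm (dimC n r) (Lam (dimC n r) (hE n r) R))\<^sup>2
       \<and> (fnorm (dimC n r) (Lam (dimC n r) (hE n r) R))\<^sup>2 \<le> real r * (fnorm (dimC n r) R)\<^sup>2
       \<and> ((fnorm (dimC n r) (Lam (dimC n r) (omegaV n r) R))\<^sup>2 = real n * (fnorm (dimC n r) R)\<^sup>2
           \<longleftrightarrow> (\<exists>u. pullback_E11 n r u \<and> R = wedge u (omegaV n r)))
       \<and> ((fnorm (dimC n r) (Lam (dimC n r) (hE n r) R))\<^sup>2 = real r * (fnorm (dimC n r) R)\<^sup>2
           \<longleftrightarrow> (\<exists>v. pullback_V11 n r v \<and> R = wedge v (hE n r)))"
  unfolding R_def c1_def
  using fnorm_Lam_omegaV_curv_form_le fnorm_Lam_omegaV_curv_form_eq_iff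
    fnorm_Lam_hE_curv_form_le fnorm_Lam_hE_curv_form_eq_iff
  by blast

end
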